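(* Consider an $n$-player team problem with common cost $c$ and compact action spaces, satisfying Assumptions A2, A4 and A6 with fixed channels $Q^1,\dots,Q^n$. For a prior $\zeta$ let $\mu_\zeta(dx,dy^1,\dots,dy^n)=\zeta(dx)\prod_{i=1}^nQ^i(dy^i|x)$, and suppose $\mu_\zeta$ satisfies Assumption A3 for each prior considered. If $\zeta_m\to\zeta$ weakly in $\mathcal{P}(\mathbb{X})$, then $J^*(c,\mu_{\zeta_m})\to J^*(c,\mu_\zeta)$; i.e. the team value function is continuous under weak convergence of the priors.
   Context: $\mathbb{X},\mathbb{Y}^1,\dots,\mathbb{Y}^n$ are standard Borel spaces; $Q^i$ is a stochastic kernel from $\mathbb{X}$ to $\mathbb{Y}^i$. A team problem consists of standard Borel action spaces $\mathbb{U}^i$ and a common cost $c:\mathbb{X}\times\mathbb{U}^1\times\cdots\times\mathbb{U}^n\to\mathbb{R}$. Policies are measurable $\gamma^i:\mathbb{Y}^i\to\mathbb{U}^i$; for an information structure $\mu$ on $\mathbb{X}\times\mathbb{Y}^1\times\cdots\times\mathbb{Y}^n$ and team policy $\bar\gamma$, $J(c,\mu,\bar\gamma)=\int c(x,\gamma^1(y^1),\dots,\gamma^n(y^n))\,d\mu$, and $J^*(c,\mu)=\inf_{\bar\gamma}J(c,\mu,\bar\gamma)$. Weak convergence: $\int f d\zeta_m\to\int f d\zeta$ for all bounded continuous $f$. $\|P-R\|_{TV}=2\sup_B|P(B)-R(B)|$. Assumptions: A2: the cost is continuous and bounded. A3: $\mu_\zeta\ll\zeta(dx)\bar Q^1(dy^1)\cdots\bar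 Q^n(dy^n)$ for some probability measures $\bar Q^i$ on $\mathbb{Y}^i$. A4: each action space is compact. A6: the channels $Q^i$ are fixed and conditionally independent given $x$, and each is continuous in total variation: $x_m\to x$ implies $\|Q^i(\cdot|x_m)-Q^i(\cdot|x)\|_{TV}\to0$. *)

theory Defs
  imports "HOL-Probability.Probability"
begin

text \<open>Observations y = (y^1,...,y^n) are represented as elements of the finite
  product PiE {..<n} (\<lambda>_. UNIV); actions likewise as elements of PiE {..<n} U.\<close>

definition obs_space :: "nat \<Rightarrow> (nat \<Rightarrow> 'y::topological_space) measure" where
  "obs_space n = PiM {..<n} (\<lambda>_. borel)"

definition info_struct ::
  "nat \<Rightarrow> (nat \<Rightarrow> 'x \<Rightarrow> 'y measure) \<Rightarrow> 'x measure \<Rightarrow> ('x \<times> (nat \<Rightarrow> 'y::topological_space)) measure" where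
  "info_struct n Q \<zeta> =
     \<zeta> \<bind> (\<lambda>x. distr (PiM {..<n} (\<lambda>i. Q i x)) (\<zeta> \<Otimes>\<^sub>M obs_space n) (\<lambda>y. (x, y)))"

definition team_policies ::
  "nat \<Rightarrow> (nat \<Rightarrow> 'u::topological_space set) \<Rightarrow> (nat \<Rightarrow> 'y::topological_space \<Rightarrow> 'u) set" where
  "team_policies n U = {\<gamma>. \<forall>i<n. \<gamma> i \<in> borel \<rightarrow>\<^sub>M borel \<and> (\<forall>y. \<gamma> i y \<in> U i)}"

definition team_cost ::
  "nat \<Rightarrow> ('x \<Rightarrow> (nat \<Rightarrow> 'u) \<Rightarrow> real) \<Rightarrow> ('x \<times> (nat \<Rightarrow> 'y)) measure
     \<Rightarrow> (nat \<Rightarrow> 'y \<Rightarrow> 'u) \<Rightarrow> real" where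
  "team_cost n c \<mu> \<gamma> = (\<integral>p. c (fst p) (\<lambda>i\<in>{..<n}. \<gamma> i (snd p i)) \<partial>\<mu>)"

definition team_value ::
  "nat \<Rightarrow> (nat \<Rightarrow> 'u::topological_space set) \<Rightarrow> ('x \<Rightarrow> (nat \<Rightarrow> 'u) \<Rightarrow> real)
     \<Rightarrow> ('x \<times> (nat \<Rightarrow> 'y::topological_space)) measure \<Rightarrow> real" where
  "team_value n U c \<mu> = (INF \<gamma>\<in>team_policies n U. team_cost n c \<mu> \<gamma>)"

definition tv_dist :: "'a measure \<Rightarrow> 'a measure \<Rightarrow> real" where
  "tv_dist P R = 2 * (SUP B\<in>sets P. \<bar>measure P B - measure R B\<bar>)"

definition weak_conv_seq :: "(nat \<Rightarrow> 'x::topological_space measure) \<Rightarrow> 'x measure \<Rightarrow> bool" where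
  "weak_conv_seq \<zeta>s \<zeta> \<longleftrightarrow>
     (\<forall>f::'x \<Rightarrow> real. continuous_on UNIV f \<and> bounded (range f) \<longrightarrow>
        (\<lambda>m. \<integral>x. f x \<partial>(\<zeta>s m)) \<longlonglongrightarrow> (\<integral>x. f x \<partial>\<zeta>))"

definition assumption_A3 ::
  "nat \<Rightarrow> (nat \<Rightarrow> 'x \<Rightarrow> 'y::topological_space measure) \<Rightarrow> 'x measure \<Rightarrow> bool" where
  "assumption_A3 n Q \<zeta> \<longleftrightarrow>
     (\<exists>Qb::nat \<Rightarrow> 'y measure.
        (\<forall>i<n. prob_space (Qb i) \<and> sets (Qb i) = sets borel) \<and>
        absolutely_continuous (\<zeta> \<Otimes>\<^sub>M PiM {..<n} Qb) (info_struct n Q \<zeta>))"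

end

theory Submission
  imports Defs
begin

text \<open>For a team policy \<open>\<gamma>\<close>, the expected cost given the state,
  \<open>x \<mapsto> \<integral> c(x, \<gamma>(y)) \<Prod>\<^sub>i Q\<^sup>i(dy\<^sup>i|x)\<close>, is bounded by the bound of \<open>c\<close>, and these functions form an
  equicontinuous family as \<open>\<gamma>\<close> ranges over all policies: \<open>c\<close> is uniformly continuous in \<open>x\<close> over the
  compact action set, and a move of the channels by \<open>s\<^sub>i\<close> in total variation moves the integral of any
  integrand bounded by \<open>B\<close> by at most \<open>B \<Sum>\<^sub>i s\<^sub>i\<close> (Hahn decomposition, one coordinate at a time).
  Weak convergence of the priors is uniform over a uniformly bounded equicontinuous family: a
  partition of unity subordinate to the equicontinuity radii reduces every member, up to a small
  error, to the same finitely many continuous test functions. Hence the expected costs converge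
  uniformly in the policy, and so do their infima.\<close>

lemma integrable_bounded_prob:
  fixes f :: "'a \<Rightarrow> real"
  assumes "prob_space M" "f \<in> borel_measurable M" "\<And>x. x \<in> space M \<Longrightarrow> \<bar>f x\<bar> \<le> C"
  shows "integrable M f"
proof -
  interpret prob_space M by fact
  show ?thesis using assms by (intro integrable_const_bound[where B=C]) (auto intro!: AE_I2)
qed

lemma abs_integral_le_bound_prob:
  fixes f :: "'a \<Rightarrow> real"
  assumes "prob_space M" "f \<in> borel_measurable M" "\<And>x. x \<in> space M \<Longrightarrow> \<bar>f x\<bar> \<le> C"
  shows "\<bar>\<integral>x. f x \<partial>M\<bar> \<le> C"
proof -
  interpret prob_space M by fact
  have f: "integrable M f" using integrable_bounded_prob assms by blast
  have "(\<integral>x. f x \<partial>M) \<le> C" using assms(3) by (intro integral_le_const f AE_I2) (force simp: abs_le_iff)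
  moreover have "-C \<le> (\<integral>x. f x \<partial>M)" using assms(3) by (intro integral_ge_const f AE_I2) (force simp: abs_le_iff)
  ultimately show ?thesis by auto
qed

lemma density_indicator_mono:
  assumes "sets R = sets P" and "Y \<in> sets P"
    and le: "\<And>X. X \<in> sets P \<Longrightarrow> X \<subseteq> Y \<Longrightarrow> emeasure R X \<le> emeasure P X"
  shows "density R (indicator Y) \<le> density P (indicator Y)"
proof -
  have "emeasure (density R (indicator Y)) A \<le> emeasure (density P (indicator Y)) A" for A
  proof (cases "A \<in> sets P")
    case True
    have "emeasure (density R (indicator Y)) A = emeasure R (Y \<inter> A)"
      using True assms(1,2) by (simp add: emeasure_restricted)
    also have "\<dots> \<le> emeasure P (Y \<inter> A)" using le True assms(2) by auto
    also have "\<dots> = emeasure (density P (indicator Y)) A"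
      using True assms(2) by (simp add: emeasure_restricted)
    finally show ?thesis .
  qed (simp add: assms(1) emeasure_notin_sets)
  moreover have "sets (density R (indicator Y)) = sets (density P (indicator Y))"
    using assms(1) by simp
  ultimately show ?thesis
    using sets_eq_imp_space_eq[OF assms(1)] by (auto simp: le_measure_iff le_fun_def)
qed

lemma integral_indicator_mono_measure:
  fixes h :: "'a \<Rightarrow> real"
  assumes P: "finite_measure P" and sR: "sets R = sets P" and Y: "Y \<in> sets P"
    and le: "\<And>X. X \<in> sets P \<Longrightarrow> X \<subseteq> Y \<Longrightarrow> emeasure R X \<le> emeasure P X"
    and h: "h \<in> borel_measurable P" and hb: "\<And>x. x \<in> space P \<Longrightarrow> 0 \<le> h x \<and> h x \<le> C"
  shows "(\<integral>x. h x * indicator Y x \<partial>R) \<le> (\<integral>x. h x * indicator Y x \<partial>P)"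
proof -
  interpret P: finite_measure P by fact
  have spR: "space R = space P" using sR by (rule sets_eq_imp_space_eq)
  have hY: "h \<in> borel_measurable M" "Y \<in> sets M" "(\<lambda>x. h x * indicator Y x) \<in> borel_measurable M"
    if "sets M = sets P" for M
  proof -
    show "h \<in> borel_measurable M" "Y \<in> sets M" using h Y that measurable_cong_sets[OF that refl] by auto
    then show "(\<lambda>x. h x * indicator Y x) \<in> borel_measurable M" by measurable
  qed
  have nn_density: "(\<integral>\<^sup>+x. ennreal (h x * indicator Y x) \<partial>M) = (\<integral>\<^sup>+x. ennreal (h x) \<partial>density M (indicator Y))"
    if "sets M = sets P" for M
    using hY[OF that] by (subst nn_integral_density) (auto intro!: nn_integral_cong split: split_indicator)
  have "(\<integral>\<^sup>+x. ennreal (h x * indicator Y x) \<partial>R) \<le> (\<integral>\<^sup>+x. ennreal (h x * indicator Y x) \<partial>P)"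
    unfolding nn_density[OF sR] nn_density[OF refl]
    by (rule nn_integral_mono_measure) (simp_all add: sR density_indicator_mono[OF sR Y le])
  moreover have "integrable P (\<lambda>x. h x * indicator Y x)"
    using hb hY[OF refl] by (intro P.integrable_const_bound[where B="\<bar>C\<bar>"]) (force intro!: AE_I2 simp: indicator_def)+
  then have "(\<integral>\<^sup>+x. ennreal (h x * indicator Y x) \<partial>P) < top"
    using hb by (subst nn_integral_eq_integral) (auto simp: indicator_def)
  ultimately show ?thesis
    using hb hY[OF sR] hY[OF refl] spR
    by (subst (1 2) integral_eq_nn_integral) (auto simp: indicator_def intro!: enn2real_mono)
qed

lemma integral_eq_indicator_decomposition:
  fixes g :: "'a \<Rightarrow> real"
  assumes M: "finite_measure M" and g: "integrable M g" and Y: "Y \<in> sets M"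
  shows "(\<integral>x. g x \<partial>M) = C * measure M Y - (\<integral>x. (C - g x) * indicator Y x \<partial>M)
    + (\<integral>x. g x * indicator (space M - Y) x \<partial>M)"
proof -
  have "integrable M (\<lambda>x. C * indicator Y x)"
    using Y finite_measure.emeasure_finite[OF M] by (simp add: less_top[symmetric])
  moreover have "integrable M (\<lambda>x. (C - g x) * indicator Y x)" "integrable M (\<lambda>x. g x * indicator (space M - Y) x)"
    using g Y finite_measure.integrable_const[OF M]
    by (auto intro!: integrable_real_mult_indicator Bochner_Integration.integrable_diff)
  moreover have "(\<integral>x. g x \<partial>M) = (\<integral>x. C * indicator Y x - (C - g x) * indicator Y x
      + g x * indicator (space M - Y) x \<partial>M)"
    by (intro Bochner_Integration.integral_cong) (auto simp: indicator_def)
  ultimately show ?thesis using Y by simp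
qed

lemma integral_diff_le_measure_diff:
  fixes g :: "'a \<Rightarrow> real"
  assumes P: "prob_space P" and R: "prob_space R" and sR: "sets R = sets P"
    and s: "\<And>A. A \<in> sets P \<Longrightarrow> \<bar>measure P A - measure R A\<bar> \<le> s"
    and g: "g \<in> borel_measurable P" and gb: "\<And>x. x \<in> space P \<Longrightarrow> 0 \<le> g x \<and> g x \<le> C"
  shows "(\<integral>x. g x \<partial>P) - (\<integral>x. g x \<partial>R) \<le> C * s"
proof -
  interpret P: prob_space P by fact
  interpret R: prob_space R by fact
  have spR: "space R = space P" using sR by (rule sets_eq_imp_space_eq)
  have gR: "g \<in> borel_measurable R" using g measurable_cong_sets[OF sR refl] by blast
  have C0: "0 \<le> C" using gb P.not_empty by fastforce
  from finite_unsigned_Hahn_decomposition[OF P.finite_measure_axioms R.finite_measure_axioms sR]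
  obtain Y where Y: "Y \<in> sets P" and YR: "\<forall>X\<in>sets P. X \<subseteq> Y \<longrightarrow> emeasure R X \<le> emeasure P X"
    and YP: "\<forall>X\<in>sets P. X \<inter> Y = {} \<longrightarrow> emeasure P X \<le> emeasure R X"
    by blast
  \<comment> \<open>On the Hahn set \<open>Y\<close> bound \<open>g\<close> by \<open>C\<close> from above, off it by \<open>0\<close> from below.\<close>
  have "(\<integral>x. g x * indicator (space P - Y) x \<partial>P) \<le> (\<integral>x. g x * indicator (space P - Y) x \<partial>R)"
    by (rule integral_indicator_mono_measure[where C=C])
      (use R.finite_measure_axioms sR Y YP gR gb spR in auto)
  moreover have "(\<integral>x. (C - g x) * indicator Y x \<partial>R) \<le> (\<integral>x. (C - g x) * indicator Y x \<partial>P)"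
    by (rule integral_indicator_mono_measure[where C=C])
      (use P.finite_measure_axioms sR Y YR g gb in auto)
  moreover have "integrable P g" "integrable R g"
    using P R g gR gb spR C0 by (auto intro!: integrable_bounded_prob[where C=C])
  then have "(\<integral>x. g x \<partial>M) = C * measure M Y - (\<integral>x. (C - g x) * indicator Y x \<partial>M)
      + (\<integral>x. g x * indicator (space P - Y) x \<partial>M)" if "M = P \<or> M = R" for M
  proof -
    have "finite_measure M" "integrable M g" "Y \<in> sets M" "space M = space P"
      using that Y sR spR P.finite_measure_axioms R.finite_measure_axioms \<open>integrable P g\<close> \<open>integrable R g\<close>
      by auto
    then show ?thesis using integral_eq_indicator_decomposition[of M g Y C] by simp
  qed
  ultimately have "(\<integral>x. g x \<partial>P) - (\<integral>x. g x \<partial>R) \<le> C * (measure P Y - measure R Y)"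
    by (smt (verit, best) right_diff_distrib)
  also have "\<dots> \<le> C * s" using s[OF Y] C0 by (intro mult_left_mono) auto
  finally show ?thesis .
qed

lemma abs_integral_diff_le_measure_diff:
  fixes f :: "'a \<Rightarrow> real"
  assumes P: "prob_space P" and R: "prob_space R" and sR: "sets R = sets P"
    and s: "\<And>A. A \<in> sets P \<Longrightarrow> \<bar>measure P A - measure R A\<bar> \<le> s"
    and f: "f \<in> borel_measurable P" and fb: "\<And>x. x \<in> space P \<Longrightarrow> \<bar>f x\<bar> \<le> B"
  shows "\<bar>(\<integral>x. f x \<partial>P) - (\<integral>x. f x \<partial>R)\<bar> \<le> 2 * B * s"
proof -
  interpret P: prob_space P by fact
  interpret R: prob_space R by fact
  have spR: "space R = space P" using sR by (rule sets_eq_imp_space_eq)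
  have fR: "f \<in> borel_measurable R" using f measurable_cong_sets[OF sR refl] by blast
  let ?g = "\<lambda>x. f x + B"
  have gb: "\<And>x. x \<in> space P \<Longrightarrow> 0 \<le> ?g x \<and> ?g x \<le> 2 * B" using fb by (force simp: abs_le_iff)
  have "(\<integral>x. ?g x \<partial>M) = (\<integral>x. f x \<partial>M) + B" if "M = P \<or> M = R" for M
  proof -
    have "integrable M f" using that fb f fR spR P R by (auto intro!: integrable_bounded_prob)
    then show ?thesis using that P.prob_space R.prob_space by auto
  qed
  moreover have "(\<integral>x. ?g x \<partial>P) - (\<integral>x. ?g x \<partial>R) \<le> 2 * B * s"
    by (rule integral_diff_le_measure_diff[OF P R sR s _ gb]) (use f in auto)
  moreover have "(\<integral>x. ?g x \<partial>R) - (\<integral>x. ?g x \<partial>P) \<le> 2 * B * s"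
    by (rule integral_diff_le_measure_diff[OF R P sR[symmetric]])
      (use s sR fR gb spR in \<open>auto simp: abs_minus_commute\<close>)
  ultimately show ?thesis by (simp add: abs_le_iff)
qed

lemma measurable_PiM_update:
  assumes "f \<in> borel_measurable (PiM (insert i I) N)" and "w \<in> space (PiM I N)"
  shows "(\<lambda>y. f (w(i := y))) \<in> borel_measurable (N i)"
proof -
  have "(\<lambda>(w, y). f (w(i := y))) \<in> borel_measurable (PiM I N \<Otimes>\<^sub>M N i)"
    using measurable_comp[OF measurable_add_dim assms(1)] by (simp add: comp_def case_prod_beta')
  from measurable_Pair2[OF this assms(2)] show ?thesis by simp
qed

lemma
  fixes f :: "('i \<Rightarrow> 'y) \<Rightarrow> real"
  assumes I: "finite I" "i \<notin> I" and P: "\<And>j. prob_space (P j)" "\<And>j. sets (P j) = sets (N j)"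
    and f: "f \<in> borel_measurable (PiM (insert i I) N)"
    and fb: "\<And>x. x \<in> space (PiM (insert i I) N) \<Longrightarrow> \<bar>f x\<bar> \<le> B"
  shows borel_measurable_PiM_section_integral:
      "(\<lambda>w. \<integral>y. f (w(i := y)) \<partial>P i) \<in> borel_measurable (PiM I N)"
    and abs_PiM_section_integral_le:
      "\<And>w. w \<in> space (PiM I N) \<Longrightarrow> \<bar>\<integral>y. f (w(i := y)) \<partial>P i\<bar> \<le> B"
    and integral_PiM_insert_section:
      "(\<integral>x. f x \<partial>PiM (insert i I) P) = (\<integral>w. (\<integral>y. f (w(i := y)) \<partial>P i) \<partial>PiM I P)"
proof -
  interpret product_sigma_finite P
    unfolding product_sigma_finite_def using P prob_space_imp_sigma_finite by blast
  have sPi: "sets (PiM J P) = sets (PiM J N)" for J using P(2) by (intro sets_PiM_cong) auto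
  have "(\<lambda>(w, y). f (w(i := y))) \<in> borel_measurable (PiM I N \<Otimes>\<^sub>M N i)"
    using measurable_comp[OF measurable_add_dim f] by (simp add: comp_def case_prod_beta')
  then have f_upd: "(\<lambda>(w, y). f (w(i := y))) \<in> borel_measurable (PiM I N \<Otimes>\<^sub>M P i)"
    by (subst measurable_cong_sets[OF sets_pair_measure_cong[OF refl P(2)] refl])
  then show "(\<lambda>w. \<integral>y. f (w(i := y)) \<partial>P i) \<in> borel_measurable (PiM I N)"
    by (rule M.borel_measurable_lebesgue_integral)
  show "\<bar>\<integral>y. f (w(i := y)) \<partial>P i\<bar> \<le> B" if w: "w \<in> space (PiM I N)" for w
  proof (rule abs_integral_le_bound_prob[OF P(1)])
    show "(\<lambda>y. f (w(i := y))) \<in> borel_measurable (P i)"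
      using measurable_PiM_update[OF f w] measurable_cong_sets[OF P(2) refl] by blast
    show "\<bar>f (w(i := y))\<bar> \<le> B" if "y \<in> space (P i)" for y
      using fb that w sets_eq_imp_space_eq[OF P(2)] by (auto simp: space_PiM PiE_iff extensional_def)
  qed
  have "integrable (PiM (insert i I) P) f"
    using f fb measurable_cong_sets[OF sPi refl] sets_eq_imp_space_eq[OF sPi] P I
    by (intro integrable_bounded_prob[OF prob_space_PiM]) auto
  then show "(\<integral>x. f x \<partial>PiM (insert i I) P) = (\<integral>w. (\<integral>y. f (w(i := y)) \<partial>P i) \<partial>PiM I P)"
    by (rule product_integral_insert[OF I])
qed

lemma abs_integral_PiM_diff_le:
  fixes f :: "('i \<Rightarrow> 'y) \<Rightarrow> real"
  assumes I: "finite I"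
    and P: "\<And>i. prob_space (P i)" "\<And>i. sets (P i) = sets (N i)"
    and R: "\<And>i. prob_space (R i)" "\<And>i. sets (R i) = sets (N i)"
    and s: "\<And>i A. i \<in> I \<Longrightarrow> A \<in> sets (N i) \<Longrightarrow> \<bar>measure (P i) A - measure (R i) A\<bar> \<le> s i"
    and f: "f \<in> borel_measurable (PiM I N)" and fb: "\<And>x. x \<in> space (PiM I N) \<Longrightarrow> \<bar>f x\<bar> \<le> B"
  shows "\<bar>(\<integral>x. f x \<partial>PiM I P) - (\<integral>x. f x \<partial>PiM I R)\<bar> \<le> 2 * B * (\<Sum>i\<in>I. s i)"
  using I s f fb
proof (induction I arbitrary: f rule: finite_induct)
  case empty
  have "(\<lambda>_. undefined) \<in> space (PiM {} N)" by (simp add: space_PiM_empty)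
  then have "B \<ge> 0" using empty.prems(3) by (meson abs_ge_zero order_trans)
  then show ?case by (simp add: PiM_empty)
next
  case (insert i I)
  define FP where "FP w = (\<integral>y. f (w(i := y)) \<partial>P i)" for w
  define FR where "FR w = (\<integral>y. f (w(i := y)) \<partial>R i)" for w
  note sections = borel_measurable_PiM_section_integral abs_PiM_section_integral_le
    integral_PiM_insert_section
  note P_sections = sections[OF insert.hyps P insert.prems(2,3), folded FP_def]
  note R_sections = sections[OF insert.hyps R insert.prems(2,3), folded FR_def]
  have sP: "sets (PiM I P) = sets (PiM I N)" using P(2) by (intro sets_PiM_cong) auto
  have FP_FR: "\<bar>FP w - FR w\<bar> \<le> 2 * B * s i" if w: "w \<in> space (PiM I N)" for w
    unfolding FP_def FR_def
  proof (rule abs_integral_diff_le_measure_diff[OF P(1) R(1)])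
    show "(\<lambda>y. f (w(i := y))) \<in> borel_measurable (P i)"
      using measurable_PiM_update[OF insert.prems(2) w] measurable_cong_sets[OF P(2) refl] by blast
    show "\<bar>f (w(i := y))\<bar> \<le> B" if "y \<in> space (P i)" for y
      using insert.prems(3) that w sets_eq_imp_space_eq[OF P(2)]
      by (auto simp: space_PiM PiE_iff extensional_def)
  qed (use P(2) R(2) insert.prems(1) in auto)
  have "\<bar>(\<integral>w. FP w \<partial>PiM I P) - (\<integral>w. FR w \<partial>PiM I P)\<bar> = \<bar>\<integral>w. FP w - FR w \<partial>PiM I P\<bar>"
    using P_sections(1,2) R_sections(1,2) P insert.hyps sP
    by (subst Bochner_Integration.integral_diff)
      (auto intro!: integrable_bounded_prob prob_space_PiM simp: measurable_cong_sets[OF sP refl]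
        sets_eq_imp_space_eq[OF sP])
  also have "\<dots> \<le> 2 * B * s i"
    using P_sections(1) R_sections(1) FP_FR P insert.hyps sP
    by (intro abs_integral_le_bound_prob prob_space_PiM)
      (auto simp: measurable_cong_sets[OF sP refl] sets_eq_imp_space_eq[OF sP])
  finally have "\<bar>(\<integral>w. FP w \<partial>PiM I P) - (\<integral>w. FR w \<partial>PiM I P)\<bar> \<le> 2 * B * s i" .
  moreover have "\<bar>(\<integral>w. FR w \<partial>PiM I P) - (\<integral>w. FR w \<partial>PiM I R)\<bar> \<le> 2 * B * (\<Sum>i\<in>I. s i)"
    using insert.IH insert.prems(1) R_sections(1,2) by blast
  ultimately show ?case
    using P_sections(3) R_sections(3) insert.hyps by (simp add: distrib_left abs_le_iff)
qed

lemma abs_measure_diff_le_tv_dist: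
  assumes "prob_space P" "prob_space R" "A \<in> sets P"
  shows "\<bar>measure P A - measure R A\<bar> \<le> tv_dist P R / 2"
proof -
  have "bdd_above ((\<lambda>B. \<bar>measure P B - measure R B\<bar>) ` sets P)"
    using prob_space.prob_le_1[OF assms(1)] prob_space.prob_le_1[OF assms(2)]
    by (intro bdd_aboveI2[where M=1]) (smt (verit) measure_nonneg)
  then show ?thesis
    using assms(3) unfolding tv_dist_def by (simp add: cSUP_upper2)
qed

lemma countable_ball_cover:
  fixes r :: "'x::{metric_space, second_countable_topology} \<Rightarrow> real"
  assumes r: "\<And>x. 0 < r x"
  shows "\<exists>ce :: nat \<Rightarrow> 'x. \<forall>y. \<exists>k. dist y (ce k) < r (ce k)"
proof -
  obtain \<F> where \<F>: "\<F> \<subseteq> range (\<lambda>x. ball x (r x))" "countable \<F>"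
    "\<Union>\<F> = \<Union>(range (\<lambda>x. ball x (r x)))"
    by (rule Lindelof[of "range (\<lambda>x. ball x (r x))"]) auto
  obtain C where C: "countable C" "\<F> = (\<lambda>x. ball x (r x)) ` C"
    using \<F>(1,2) countable_subset_image[of \<F> "\<lambda>x. ball x (r x)" UNIV] by blast
  have "\<exists>c\<in>C. dist c y < r c" for y
  proof -
    have "y \<in> ball y (r y)" using r[of y] by simp
    then have "y \<in> \<Union>\<F>" using \<F>(3) by blast
    then show ?thesis using C(2) by auto
  qed
  then have "\<forall>y. \<exists>k. dist y (from_nat_into C k) < r (from_nat_into C k)"
    using range_from_nat_into[of C] C(1) by (metis dist_commute empty_iff rangeE)
  then show ?thesis by blast
qed

lemma countable_partition_of_unity:
  fixes \<delta> :: "'x::{metric_space, second_countable_topology} \<Rightarrow> real"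
  assumes \<delta>: "\<And>x. \<delta> x > 0"
  obtains \<phi> :: "nat \<Rightarrow> 'x \<Rightarrow> real" and ce :: "nat \<Rightarrow> 'x"
  where "\<And>k. continuous_on UNIV (\<phi> k)" "\<And>k y. 0 \<le> \<phi> k y"
    and "\<And>k y. \<phi> k y \<noteq> 0 \<Longrightarrow> dist y (ce k) < \<delta> (ce k)"
    and "\<And>N y. (\<Sum>k<N. \<phi> k y) \<le> 1"
    and "\<And>y. \<forall>\<^sub>F N in sequentially. (\<Sum>k<N. \<phi> k y) = 1"
proof -
  obtain ce :: "nat \<Rightarrow> 'x" where cover: "\<And>y. \<exists>k. dist y (ce k) < \<delta> (ce k) / 2"
    using countable_ball_cover[of "\<lambda>x. \<delta> x / 2"] \<delta> by auto
  \<comment> \<open>\<open>\<psi> k\<close> is a tent equal to 1 on the ball of radius \<open>\<delta>/2\<close> around \<open>ce k\<close> and 0 outside radius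
    \<open>\<delta>\<close>; the partial sums of \<open>\<phi>\<close> telescope to \<open>1 - \<rho> N\<close>, which vanishes once one of the first
    \<open>N\<close> tents equals 1.\<close>
  define \<psi> where "\<psi> k y = min 1 (max 0 (2 - 2 * dist y (ce k) / \<delta> (ce k)))" for k y
  define \<rho> where "\<rho> N y = (\<Prod>k<N. 1 - \<psi> k y)" for N y
  define \<phi> where "\<phi> k y = \<psi> k y * \<rho> k y" for k y
  have \<psi>01: "0 \<le> \<psi> k y \<and> \<psi> k y \<le> 1" for k y unfolding \<psi>_def by auto
  have \<rho>01: "0 \<le> \<rho> N y \<and> \<rho> N y \<le> 1" for N y
    unfolding \<rho>_def using \<psi>01 by (auto intro!: prod_nonneg prod_le_1)
  have sum_\<phi>: "(\<Sum>k<N. \<phi> k y) = 1 - \<rho> N y" for N y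
    by (induction N) (auto simp: \<rho>_def \<phi>_def algebra_simps)
  have \<psi>_cont: "continuous_on UNIV (\<psi> k)" for k
    unfolding \<psi>_def using \<delta>[of "ce k"] by (intro continuous_intros) auto
  show thesis
  proof
    show "continuous_on UNIV (\<phi> k)" for k
      unfolding \<phi>_def \<rho>_def by (intro continuous_intros \<psi>_cont)
    show "0 \<le> \<phi> k y" for k y unfolding \<phi>_def using \<psi>01 \<rho>01 by auto
    show "dist y (ce k) < \<delta> (ce k)" if "\<phi> k y \<noteq> 0" for k y
    proof (rule ccontr)
      assume "\<not> ?thesis"
      then have "2 * dist y (ce k) / \<delta> (ce k) \<ge> 2" using \<delta>[of "ce k"] by (simp add: field_simps)
      then show False using that unfolding \<phi>_def \<psi>_def by auto
    qed
    show "(\<Sum>k<N. \<phi> k y) \<le> 1" for N y using sum_\<phi> \<rho>01 by simp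
    show "\<forall>\<^sub>F N in sequentially. (\<Sum>k<N. \<phi> k y) = 1" for y
    proof -
      obtain k where k: "dist y (ce k) < \<delta> (ce k) / 2" using cover by blast
      then have "\<psi> k y = 1" using \<delta>[of "ce k"] by (simp add: \<psi>_def field_simps)
      then have "\<rho> N y = 0" if "N \<ge> Suc k" for N
        unfolding \<rho>_def using that by (intro prod_zero) auto
      then show ?thesis unfolding eventually_sequentially sum_\<phi> by auto
    qed
  qed
qed

lemma integrable_continuous_bounded_prob:
  fixes f :: "'x::topological_space \<Rightarrow> real"
  assumes "prob_space \<nu>" "sets \<nu> = sets borel" "continuous_on UNIV f" "\<And>x. \<bar>f x\<bar> \<le> C"
  shows "integrable \<nu> f"
  using assms borel_measurable_continuous_onI[OF assms(3)] measurable_cong_sets[OF assms(2) refl]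
  by (intro integrable_bounded_prob[where C=C]) auto

lemma abs_diff_weighted_sum_le:
  fixes a B e :: real and N :: nat
  assumes w: "\<And>k. 0 \<le> w k" "(\<Sum>k<N. w k) \<le> 1" and "\<bar>a\<bar> \<le> B"
    and close: "\<And>k. k < N \<Longrightarrow> w k \<noteq> 0 \<Longrightarrow> \<bar>a - b k\<bar> \<le> e" and "0 \<le> e"
  shows "\<bar>a - (\<Sum>k<N. b k * w k)\<bar> \<le> e + B * (1 - (\<Sum>k<N. w k))"
proof -
  have "a - (\<Sum>k<N. b k * w k) = (\<Sum>k<N. w k * (a - b k)) + (1 - (\<Sum>k<N. w k)) * a"
    by (simp add: algebra_simps sum_subtractf sum_distrib_left sum_distrib_right)
  moreover have "\<bar>w k * (a - b k)\<bar> \<le> e * w k" if "k < N" for k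
    using w(1)[of k] close[OF that] by (cases "w k = 0") (auto simp: abs_mult mult.commute mult_left_mono)
  then have "\<bar>\<Sum>k<N. w k * (a - b k)\<bar> \<le> e * (\<Sum>k<N. w k)"
    unfolding sum_distrib_left by (intro order_trans[OF sum_abs sum_mono]) auto
  moreover have "\<bar>(1 - (\<Sum>k<N. w k)) * a\<bar> \<le> B * (1 - (\<Sum>k<N. w k))"
    using mult_left_mono[OF \<open>\<bar>a\<bar> \<le> B\<close>, of "1 - (\<Sum>k<N. w k)"] w(2) by (simp add: abs_mult mult_ac)
  moreover have "e * (\<Sum>k<N. w k) \<le> e" using w(2) \<open>0 \<le> e\<close> by (simp add: mult_left_le)
  ultimately show ?thesis by (smt (verit))
qed

lemma abs_integral_diff_partition_sum_le:
  fixes g :: "'x::topological_space \<Rightarrow> real" and N :: nat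
  assumes \<nu>: "prob_space \<nu>" "sets \<nu> = sets borel"
    and \<phi>: "\<And>k. continuous_on UNIV (\<phi> k)" "\<And>k y. 0 \<le> \<phi> k y" "\<And>y. (\<Sum>k<N. \<phi> k y) \<le> 1"
    and g: "continuous_on UNIV g" "\<And>y. \<bar>g y\<bar> \<le> B"
    and osc: "\<And>k y. k < N \<Longrightarrow> \<phi> k y \<noteq> 0 \<Longrightarrow> \<bar>g y - g (ce k)\<bar> \<le> e" and "0 \<le> e"
  shows "\<bar>(\<integral>y. g y \<partial>\<nu>) - (\<Sum>k<N. g (ce k) * (\<integral>y. \<phi> k y \<partial>\<nu>))\<bar>
    \<le> e + B * (\<integral>y. 1 - (\<Sum>k<N. \<phi> k y) \<partial>\<nu>)"
proof -
  interpret \<nu>: prob_space \<nu> by fact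
  have pointwise: "\<bar>g y - (\<Sum>k<N. g (ce k) * \<phi> k y)\<bar> \<le> e + B * (1 - (\<Sum>k<N. \<phi> k y))" for y
    using \<phi>(2,3) g(2) osc \<open>0 \<le> e\<close> by (intro abs_diff_weighted_sum_le) auto
  have \<phi>_le_1: "\<phi> k y \<le> 1" if "k < N" for k y
  proof -
    have "\<phi> k y \<le> (\<Sum>k<N. \<phi> k y)" using that \<phi>(2) by (intro member_le_sum) auto
    then show ?thesis using \<phi>(3)[of y] by linarith
  qed
  have int_\<phi>: "integrable \<nu> (\<phi> k)" if "k < N" for k
    using \<phi>(1,2) \<phi>_le_1 that by (intro integrable_continuous_bounded_prob[OF \<nu>, where C=1]) auto
  have int_g: "integrable \<nu> g" by (rule integrable_continuous_bounded_prob[OF \<nu> g])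
  have int_sum: "integrable \<nu> (\<lambda>y. \<Sum>k<N. g (ce k) * \<phi> k y)"
    by (auto intro!: integrable_sum integrable_mult_right int_\<phi>)
  have int_rest: "integrable \<nu> (\<lambda>y. 1 - (\<Sum>k<N. \<phi> k y))"
    by (auto intro!: Bochner_Integration.integrable_diff integrable_sum int_\<phi>)
  have "(\<integral>y. (\<Sum>k<N. g (ce k) * \<phi> k y) \<partial>\<nu>) = (\<Sum>k<N. g (ce k) * (\<integral>y. \<phi> k y \<partial>\<nu>))"
    by (simp add: int_\<phi>)
  then have "(\<integral>y. g y \<partial>\<nu>) - (\<Sum>k<N. g (ce k) * (\<integral>y. \<phi> k y \<partial>\<nu>)) = (\<integral>y. g y - (\<Sum>k<N. g (ce k) * \<phi> k y) \<partial>\<nu>)"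
    using int_g int_sum by (simp add: Bochner_Integration.integral_diff)
  also have "\<bar>\<dots>\<bar> \<le> (\<integral>y. e + B * (1 - (\<Sum>k<N. \<phi> k y)) \<partial>\<nu>)"
  proof (rule order_trans[OF integral_abs_bound integral_mono])
    show "integrable \<nu> (\<lambda>y. \<bar>g y - (\<Sum>k<N. g (ce k) * \<phi> k y)\<bar>)" using int_g int_sum by auto
    show "integrable \<nu> (\<lambda>y. e + B * (1 - (\<Sum>k<N. \<phi> k y)))" using int_rest by simp
  qed (rule pointwise)
  also have "\<dots> = e + B * (\<integral>y. 1 - (\<Sum>k<N. \<phi> k y) \<partial>\<nu>)"
    using int_rest by (simp add: \<nu>.prob_space)
  finally show ?thesis .
qed

lemma abs_integral_diff_le_partition:
  fixes g :: "'x::topological_space \<Rightarrow> real" and N :: nat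
  assumes \<nu>: "prob_space \<nu>" "sets \<nu> = sets borel" and \<nu>': "prob_space \<nu>'" "sets \<nu>' = sets borel"
    and \<phi>: "\<And>k. continuous_on UNIV (\<phi> k)" "\<And>k y. 0 \<le> \<phi> k y" "\<And>y. (\<Sum>k<N. \<phi> k y) \<le> 1"
    and g: "continuous_on UNIV g" "\<And>y. \<bar>g y\<bar> \<le> B"
    and osc: "\<And>k y. k < N \<Longrightarrow> \<phi> k y \<noteq> 0 \<Longrightarrow> \<bar>g y - g (ce k)\<bar> \<le> e" and "0 \<le> e"
  shows "\<bar>(\<integral>y. g y \<partial>\<nu>) - (\<integral>y. g y \<partial>\<nu>')\<bar>
    \<le> 2 * e + B * (\<integral>y. 1 - (\<Sum>k<N. \<phi> k y) \<partial>\<nu>) + B * (\<integral>y. 1 - (\<Sum>k<N. \<phi> k y) \<partial>\<nu>')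
      + B * (\<Sum>k<N. \<bar>(\<integral>y. \<phi> k y \<partial>\<nu>) - (\<integral>y. \<phi> k y \<partial>\<nu>')\<bar>)"
proof -
  have approx: "\<bar>(\<integral>y. g y \<partial>M) - (\<Sum>k<N. g (ce k) * (\<integral>y. \<phi> k y \<partial>M))\<bar>
      \<le> e + B * (\<integral>y. 1 - (\<Sum>k<N. \<phi> k y) \<partial>M)" if "prob_space M" "sets M = sets borel" for M
    using that \<phi> g osc \<open>0 \<le> e\<close> by (rule abs_integral_diff_partition_sum_le)
  have "(\<Sum>k<N. g (ce k) * (\<integral>y. \<phi> k y \<partial>\<nu>)) - (\<Sum>k<N. g (ce k) * (\<integral>y. \<phi> k y \<partial>\<nu>'))
      = (\<Sum>k<N. g (ce k) * ((\<integral>y. \<phi> k y \<partial>\<nu>) - (\<integral>y. \<phi> k y \<partial>\<nu>')))"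
    by (simp add: sum_subtractf right_diff_distrib)
  also have "\<bar>\<dots>\<bar> \<le> B * (\<Sum>k<N. \<bar>(\<integral>y. \<phi> k y \<partial>\<nu>) - (\<integral>y. \<phi> k y \<partial>\<nu>')\<bar>)"
    unfolding sum_distrib_left using g(2)
    by (intro order_trans[OF sum_abs sum_mono]) (simp add: abs_mult mult_right_mono)
  finally show ?thesis
    using approx[OF \<nu>] approx[OF \<nu>']
    by (simp only: abs_le_iff) linarith
qed

lemma tendsto_integral_partition_rest:
  fixes \<phi> :: "nat \<Rightarrow> 'x::topological_space \<Rightarrow> real"
  assumes \<nu>: "prob_space \<nu>" "sets \<nu> = sets borel"
    and \<phi>: "\<And>k. continuous_on UNIV (\<phi> k)" "\<And>k y. 0 \<le> \<phi> k y" "\<And>N y. (\<Sum>k<N. \<phi> k y) \<le> 1"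
    and eventually_one: "\<And>y. \<forall>\<^sub>F N in sequentially. (\<Sum>k<N. \<phi> k y) = 1"
  shows "(\<lambda>N. \<integral>y. 1 - (\<Sum>k<N. \<phi> k y) \<partial>\<nu>) \<longlonglongrightarrow> 0"
proof -
  have "(\<lambda>N. \<integral>y. 1 - (\<Sum>k<N. \<phi> k y) \<partial>\<nu>) \<longlonglongrightarrow> (\<integral>y. 0 \<partial>\<nu>)"
  proof (rule integral_dominated_convergence[where w="\<lambda>_. 1"])
    show "(\<lambda>y. 1 - (\<Sum>k<N. \<phi> k y)) \<in> borel_measurable \<nu>" for N
    proof -
      have "continuous_on UNIV (\<lambda>y. 1 - (\<Sum>k<N. \<phi> k y))" using \<phi>(1) by (intro continuous_intros)
      then show ?thesis using measurable_cong_sets[OF \<nu>(2) refl] borel_measurable_continuous_onI by blast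
    qed
    show "integrable \<nu> (\<lambda>_. 1::real)"
      using \<nu>(1) by (simp add: prob_space.finite_measure finite_measure.integrable_const)
    show "AE y in \<nu>. (\<lambda>N. 1 - (\<Sum>k<N. \<phi> k y)) \<longlonglongrightarrow> 0"
      using eventually_one by (intro AE_I2) (auto intro: tendsto_eventually elim: eventually_mono)
    show "AE y in \<nu>. norm (1 - (\<Sum>k<N. \<phi> k y)) \<le> 1" for N
      using \<phi>(2,3) by (intro AE_I2) (auto simp: sum_nonneg)
  qed simp
  then show ?thesis by simp
qed

lemma continuous_on_UNIV_if_dist_abs_le:
  fixes f :: "'x::metric_space \<Rightarrow> real"
  assumes "\<And>x e. 0 < e \<Longrightarrow> \<exists>d>0. \<forall>y. dist y x < d \<longrightarrow> \<bar>f y - f x\<bar> \<le> e"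
  shows "continuous_on UNIV f"
  unfolding continuous_on_iff
proof (intro ballI allI impI)
  fix x and r :: real assume "0 < r"
  then obtain d where d: "0 < d" "\<forall>y. dist y x < d \<longrightarrow> \<bar>f y - f x\<bar> \<le> r / 2"
    using assms[of "r / 2"] by auto
  show "\<exists>d>0. \<forall>y\<in>UNIV. dist y x < d \<longrightarrow> dist (f y) (f x) < r"
  proof (intro exI conjI ballI impI)
    fix y assume "dist y x < d"
    then show "dist (f y) (f x) < r" using d(2) \<open>0 < r\<close> by (force simp: dist_real_def)
  qed (fact d(1))
qed

lemma weak_conv_seq_uniform_limit:
  fixes g :: "'p \<Rightarrow> 'x::{metric_space, second_countable_topology} \<Rightarrow> real"
  assumes \<mu>s: "\<And>m. prob_space (\<mu>s m)" "\<And>m. sets (\<mu>s m) = sets borel"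
    and \<mu>: "prob_space \<mu>" "sets \<mu> = sets borel"
    and conv: "weak_conv_seq \<mu>s \<mu>"
    and bnd: "\<And>\<gamma> x. \<gamma> \<in> \<Gamma> \<Longrightarrow> \<bar>g \<gamma> x\<bar> \<le> B"
    and equi: "\<And>x e. 0 < e \<Longrightarrow> \<exists>d>0. \<forall>y. dist y x < d \<longrightarrow> (\<forall>\<gamma>\<in>\<Gamma>. \<bar>g \<gamma> y - g \<gamma> x\<bar> \<le> e)"
  shows "uniform_limit \<Gamma> (\<lambda>m \<gamma>. \<integral>x. g \<gamma> x \<partial>\<mu>s m) (\<lambda>\<gamma>. \<integral>x. g \<gamma> x \<partial>\<mu>) sequentially"
proof (rule uniform_limitI)
  fix \<epsilon> :: real assume "0 < \<epsilon>"
  define e where "e = \<epsilon> / 8"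
  have "0 < e" using \<open>0 < \<epsilon>\<close> by (simp add: e_def)
  have g_cont: "continuous_on UNIV (g \<gamma>)" if "\<gamma> \<in> \<Gamma>" for \<gamma>
    using equi that by (intro continuous_on_UNIV_if_dist_abs_le) blast
  have "\<forall>x. \<exists>d>0. \<forall>y. dist y x < d \<longrightarrow> (\<forall>\<gamma>\<in>\<Gamma>. \<bar>g \<gamma> y - g \<gamma> x\<bar> \<le> e)"
    using equi[OF \<open>0 < e\<close>] by blast
  then obtain \<delta> where "\<forall>x. 0 < \<delta> x \<and> (\<forall>y. dist y x < \<delta> x \<longrightarrow> (\<forall>\<gamma>\<in>\<Gamma>. \<bar>g \<gamma> y - g \<gamma> x\<bar> \<le> e))"
    by metis
  then have \<delta>: "\<And>x. 0 < \<delta> x" "\<And>x y \<gamma>. dist y x < \<delta> x \<Longrightarrow> \<gamma> \<in> \<Gamma> \<Longrightarrow> \<bar>g \<gamma> y - g \<gamma> x\<bar> \<le> e"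
    by blast+
  obtain \<phi> :: "nat \<Rightarrow> 'x \<Rightarrow> real" and ce where \<phi>: "\<And>k. continuous_on UNIV (\<phi> k)" "\<And>k y. 0 \<le> \<phi> k y"
    "\<And>k y. \<phi> k y \<noteq> 0 \<Longrightarrow> dist y (ce k) < \<delta> (ce k)" "\<And>N y. (\<Sum>k<N. \<phi> k y) \<le> 1"
    "\<And>y. \<forall>\<^sub>F N in sequentially. (\<Sum>k<N. \<phi> k y) = 1"
    using countable_partition_of_unity[of \<delta>] \<delta>(1) by blast
  define rest :: "nat \<Rightarrow> 'x \<Rightarrow> real" where "rest N y = 1 - (\<Sum>k<N. \<phi> k y)" for N y
  have "(\<lambda>N. B * (\<integral>y. rest N y \<partial>\<mu>)) \<longlonglongrightarrow> 0"
    using tendsto_integral_partition_rest[OF \<mu> \<phi>(1,2,4,5)] unfolding rest_def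
    by (simp add: tendsto_mult_right_zero)
  then have "\<forall>\<^sub>F N in sequentially. B * (\<integral>y. rest N y \<partial>\<mu>) < e"
    using \<open>0 < e\<close> by (rule order_tendstoD(2))
  then obtain N where N: "B * (\<integral>y. rest N y \<partial>\<mu>) < e"
    by (auto simp: eventually_sequentially)
  have weak: "(\<lambda>m. \<integral>y. f y \<partial>\<mu>s m) \<longlonglongrightarrow> (\<integral>y. f y \<partial>\<mu>)" if "continuous_on UNIV f" "\<And>y. 0 \<le> f y \<and> f y \<le> 1"
    for f :: "'x \<Rightarrow> real"
  proof -
    have "bounded (range f)" using that(2) by (intro boundedI[where B=1]) (force simp: abs_le_iff)
    then show ?thesis using conv that(1) unfolding weak_conv_seq_def by blast
  qed
  \<comment> \<open>Replacing \<open>g \<gamma>\<close> by \<open>\<Sum>k<N. g \<gamma> (ce k) * \<phi> k\<close> leaves only the \<open>N\<close> test functions \<open>\<phi> k\<close>,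
    which do not depend on \<open>\<gamma>\<close>.\<close>
  define bound where "bound m = 2 * e + B * (\<integral>y. rest N y \<partial>\<mu>s m) + B * (\<integral>y. rest N y \<partial>\<mu>)
    + B * (\<Sum>k<N. \<bar>(\<integral>y. \<phi> k y \<partial>\<mu>s m) - (\<integral>y. \<phi> k y \<partial>\<mu>)\<bar>)" for m
  have estimate: "\<bar>(\<integral>y. g \<gamma> y \<partial>\<mu>s m) - (\<integral>y. g \<gamma> y \<partial>\<mu>)\<bar> \<le> bound m" if "\<gamma> \<in> \<Gamma>" for m \<gamma>
    unfolding bound_def rest_def using \<mu>s \<mu> \<phi> \<delta>(2) bnd g_cont \<open>0 < e\<close> that
    by (intro abs_integral_diff_le_partition[where ce=ce]) auto
  have bound_lim: "bound \<longlonglongrightarrow> 2 * e + B * (\<integral>y. rest N y \<partial>\<mu>) + B * (\<integral>y. rest N y \<partial>\<mu>) + B * 0"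
    unfolding bound_def rest_def using \<phi>(1,2,4)
    by (intro tendsto_intros weak tendsto_null_sum tendsto_rabs_zero LIM_zero)
      (auto intro!: continuous_intros order_trans[OF member_le_sum \<phi>(4)] simp: sum_nonneg)
  have "2 * e + B * (\<integral>y. rest N y \<partial>\<mu>) + B * (\<integral>y. rest N y \<partial>\<mu>) + B * 0 < \<epsilon>"
    using N \<open>0 < \<epsilon>\<close> unfolding e_def by linarith
  from order_tendstoD(2)[OF bound_lim this] have "\<forall>\<^sub>F m in sequentially. bound m < \<epsilon>" .
  with estimate show "\<forall>\<^sub>F m in sequentially. \<forall>\<gamma>\<in>\<Gamma>. dist (\<integral>y. g \<gamma> y \<partial>\<mu>s m) (\<integral>y. g \<gamma> y \<partial>\<mu>) < \<epsilon>"
    by (auto simp: dist_real_def elim!: eventually_mono intro: le_less_trans)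
qed

lemma cINF_le_cINF_add:
  fixes a b :: "'p \<Rightarrow> real"
  assumes "S \<noteq> {}" "bdd_below (a ` S)" "\<And>s. s \<in> S \<Longrightarrow> a s \<le> b s + e"
  shows "(INF s\<in>S. a s) \<le> (INF s\<in>S. b s) + e"
proof -
  have "(INF s\<in>S. a s) - e \<le> b s" if "s \<in> S" for s
    using cINF_lower[OF assms(2) that] assms(3)[OF that] by linarith
  then have "(INF s\<in>S. a s) - e \<le> (INF s\<in>S. b s)" using assms(1) by (intro cINF_greatest)
  then show ?thesis by simp
qed

lemma tendsto_INF_uniform_limit:
  fixes a :: "nat \<Rightarrow> 'p \<Rightarrow> real"
  assumes "S \<noteq> {}" and "bdd_below (b ` S)" and "uniform_limit S a b sequentially"
  shows "(\<lambda>m. INF s\<in>S. a m s) \<longlonglongrightarrow> (INF s\<in>S. b s)"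
proof (rule tendstoI)
  fix e :: real assume "0 < e"
  then have "\<forall>\<^sub>F m in sequentially. \<forall>s\<in>S. dist (a m s) (b s) < e / 2"
    using assms(3) by (intro uniform_limitD) auto
  then show "\<forall>\<^sub>F m in sequentially. dist (INF s\<in>S. a m s) (INF s\<in>S. b s) < e"
  proof eventually_elim
    case (elim m)
    then have close: "\<And>s. s \<in> S \<Longrightarrow> \<bar>a m s - b s\<bar> < e / 2" by (simp add: dist_real_def)
    obtain M where M: "\<And>s. s \<in> S \<Longrightarrow> M \<le> b s" using assms(2) by (auto simp: bdd_below_def)
    have "bdd_below (a m ` S)"
    proof (rule bdd_belowI2)
      show "M - e / 2 \<le> a m s" if "s \<in> S" for s using M[OF that] close[OF that] by linarith
    qed
    then have "(INF s\<in>S. a m s) \<le> (INF s\<in>S. b s) + e / 2"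
      using close assms(1) by (intro cINF_le_cINF_add) (auto dest!: close simp: abs_less_iff)
    moreover have "(INF s\<in>S. b s) \<le> (INF s\<in>S. a m s) + e / 2"
      using close assms(1,2) by (intro cINF_le_cINF_add) (auto dest!: close simp: abs_less_iff)
    ultimately show ?case using \<open>0 < e\<close> by (simp add: dist_real_def abs_le_iff)
  qed
qed

lemma uniform_limit_continuous_on_compact_section:
  fixes c :: "'x::metric_space \<Rightarrow> 'k::metric_space \<Rightarrow> real"
  assumes K: "compact K" and c: "continuous_on (UNIV \<times> K) (\<lambda>p. c (fst p) (snd p))"
    and xs: "xs \<longlonglongrightarrow> x"
  shows "uniform_limit K (\<lambda>m. c (xs m)) (c x) sequentially"
proof (rule uniform_limitI, rule ccontr)
  fix e :: real assume "0 < e" and "\<not> (\<forall>\<^sub>F m in sequentially. \<forall>u\<in>K. dist (c (xs m) u) (c x u) < e)"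
  then have "\<exists>\<^sub>F m in sequentially. \<exists>u\<in>K. e \<le> dist (c (xs m) u) (c x u)"
    by (simp add: not_eventually not_less)
  then have "infinite {m. \<exists>u\<in>K. e \<le> dist (c (xs m) u) (c x u)}"
    by (simp add: frequently_cofinite[symmetric] cofinite_eq_sequentially)
  from infinite_enumerate[OF this] obtain r :: "nat \<Rightarrow> nat"
    where r: "strict_mono r" "\<forall>m. \<exists>u\<in>K. e \<le> dist (c (xs (r m)) u) (c x u)"
    by auto
  then have "\<forall>m. \<exists>u. u \<in> K \<and> e \<le> dist (c (xs (r m)) u) (c x u)" by blast
  from choice[OF this] obtain u where "\<forall>m. u m \<in> K \<and> e \<le> dist (c (xs (r m)) (u m)) (c x (u m))"
    by blast
  then have u: "\<And>m. u m \<in> K" "\<And>m. e \<le> dist (c (xs (r m)) (u m)) (c x (u m))" by blast+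
  obtain l s where l: "l \<in> K" "strict_mono s" "(u \<circ> s) \<longlonglongrightarrow> l"
    using seq_compactE[OF compact_imp_seq_compact[OF K], of u] u(1) by blast
  have xrs: "(\<lambda>m. xs (r (s m))) \<longlonglongrightarrow> x"
    using LIMSEQ_subseq_LIMSEQ[OF LIMSEQ_subseq_LIMSEQ[OF xs r(1)] l(2)] by (simp add: comp_def)
  have "((\<lambda>m. (xs (r (s m)), u (s m))) \<longlongrightarrow> (x, l)) sequentially"
    using xrs l(3) by (intro tendsto_Pair) (auto simp: comp_def)
  from continuous_on_tendsto_compose[OF c this]
  have "(\<lambda>m. c (xs (r (s m))) (u (s m))) \<longlonglongrightarrow> c x l" using l(1) u(1) by auto
  moreover have "((\<lambda>m. (x, u (s m))) \<longlongrightarrow> (x, l)) sequentially"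
    using l(3) by (intro tendsto_Pair) (auto simp: comp_def)
  from continuous_on_tendsto_compose[OF c this]
  have "(\<lambda>m. c x (u (s m))) \<longlonglongrightarrow> c x l" using l(1) u(1) by auto
  ultimately have "(\<lambda>m. dist (c (xs (r (s m))) (u (s m))) (c x (u (s m)))) \<longlonglongrightarrow> dist (c x l) (c x l)"
    by (rule tendsto_dist)
  then have "\<forall>\<^sub>F m in sequentially. dist (c (xs (r (s m))) (u (s m))) (c x (u (s m))) < e"
    using \<open>0 < e\<close> by (intro order_tendstoD(2)) auto
  then obtain m where "dist (c (xs (r (s m))) (u (s m))) (c x (u (s m))) < e"
    by (auto simp: eventually_sequentially)
  then show False using u(2)[of "s m"] by simp
qed

lemma compact_PiE:
  fixes U :: "'i \<Rightarrow> 'u::topological_space set"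
  assumes "\<And>i. i \<in> I \<Longrightarrow> compact (U i)"
  shows "compact (PiE I U)"
proof -
  define V where "V i = (if i \<in> I then U i else {undefined})" for i
  have "PiE I U = PiE UNIV V"
    by (auto simp: V_def PiE_iff extensional_def split: if_splits)
  moreover have "compactin (product_topology (\<lambda>i. euclidean) UNIV) (PiE UNIV V)"
    unfolding compactin_PiE using assms by (auto simp: V_def)
  ultimately show ?thesis by (simp add: euclidean_product_topology)
qed

lemma measurable_PiM_kernels:
  assumes I: "finite I" and K: "\<And>i. K i \<in> M \<rightarrow>\<^sub>M prob_algebra (N i)"
  shows "(\<lambda>x. PiM I (\<lambda>i. K i x)) \<in> M \<rightarrow>\<^sub>M prob_algebra (PiM I N)"
proof (rule measurable_prob_algebra_generated[OF sets_PiM Int_stable_prod_algebra prod_algebra_sets_into_space])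
  fix a assume a: "a \<in> space M"
  then have Ka: "\<And>i. prob_space (K i a)" "\<And>i. sets (K i a) = sets (N i)"
    using measurable_space[OF K a] by (auto simp: space_prob_algebra)
  show "prob_space (PiM I (\<lambda>i. K i a))" using Ka by (intro prob_space_PiM)
  show "sets (PiM I (\<lambda>i. K i a)) = sets (PiM I N)" using Ka by (intro sets_PiM_cong) auto
next
  fix A assume "A \<in> prod_algebra I N"
  then obtain X where A: "A = PiE I X" and X: "\<And>i. i \<in> I \<Longrightarrow> X i \<in> sets (N i)"
    unfolding prod_algebra_eq_finite[OF I] by blast
  have "emeasure (PiM I (\<lambda>i. K i a)) A = (\<Prod>i\<in>I. emeasure (K i a) (X i))" if a: "a \<in> space M" for a
  proof -
    have Ka: "\<And>i. prob_space (K i a)" "\<And>i. sets (K i a) = sets (N i)"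
      using measurable_space[OF K a] by (auto simp: space_prob_algebra)
    interpret product_sigma_finite "\<lambda>i. K i a"
      unfolding product_sigma_finite_def using Ka(1) prob_space_imp_sigma_finite by blast
    show ?thesis unfolding A using X Ka(2) by (intro emeasure_PiM I) auto
  qed
  moreover have "(\<lambda>a. \<Prod>i\<in>I. emeasure (K i a) (X i)) \<in> borel_measurable M"
  proof (intro borel_measurable_prod_ennreal)
    fix i assume "i \<in> I"
    from measurable_compose[OF measurable_prob_algebraD[OF K] measurable_emeasure_subprob_algebra[OF X[OF this]]]
    show "(\<lambda>a. emeasure (K i a) (X i)) \<in> borel_measurable M" .
  qed
  ultimately show "(\<lambda>a. emeasure (PiM I (\<lambda>i. K i a)) A) \<in> borel_measurable M"
    by (subst measurable_cong) auto
qed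

definition cond_team_cost ::
  "nat \<Rightarrow> (nat \<Rightarrow> 'x \<Rightarrow> 'y measure) \<Rightarrow> ('x \<Rightarrow> (nat \<Rightarrow> 'u) \<Rightarrow> real) \<Rightarrow> (nat \<Rightarrow> 'y \<Rightarrow> 'u) \<Rightarrow> 'x \<Rightarrow> real"
  where "cond_team_cost n Q c \<gamma> x = (\<integral>y. c x (\<lambda>i\<in>{..<n}. \<gamma> i (y i)) \<partial>PiM {..<n} (\<lambda>i. Q i x))"

lemma team_policy_actions: "\<gamma> \<in> team_policies n U \<Longrightarrow> (\<lambda>i\<in>{..<n}. \<gamma> i (y i)) \<in> PiE {..<n} U"
  unfolding team_policies_def by auto

locale team_problem =
  fixes n :: nat and U :: "nat \<Rightarrow> 'u::polish_space set"
    and c :: "'x::polish_space \<Rightarrow> (nat \<Rightarrow> 'u) \<Rightarrow> real"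
    and Q :: "nat \<Rightarrow> 'x \<Rightarrow> 'y::polish_space measure" and B :: real
  assumes compact_U: "\<And>i. i < n \<Longrightarrow> compact (U i)"
    and U_nonempty: "\<And>i. i < n \<Longrightarrow> U i \<noteq> {}"
    and continuous_cost: "continuous_on (UNIV \<times> PiE {..<n} U) (\<lambda>p. c (fst p) (snd p))"
    and cost_bounded: "\<And>x u. u \<in> PiE {..<n} U \<Longrightarrow> \<bar>c x u\<bar> \<le> B"
    and kernel: "\<And>i. i < n \<Longrightarrow> Q i \<in> borel \<rightarrow>\<^sub>M prob_algebra borel"
    and tv_continuous: "\<And>i x xs. i < n \<Longrightarrow> xs \<longlonglongrightarrow> x \<Longrightarrow> (\<lambda>m. tv_dist (Q i (xs m)) (Q i x)) \<longlonglongrightarrow> 0"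
begin

lemma prob_space_Q: "i < n \<Longrightarrow> prob_space (Q i x)"
  and sets_Q: "i < n \<Longrightarrow> sets (Q i x) = sets borel"
  using measurable_space[OF kernel, of i x] by (auto simp: space_prob_algebra)

text \<open>Point masses beyond \<open>n\<close> turn the channels into a family of kernels on all indices, as
  the product lemmas require.\<close>
definition Q_ext :: "nat \<Rightarrow> 'x \<Rightarrow> 'y measure"
  where "Q_ext i = (if i < n then Q i else (\<lambda>_. return borel undefined))"

lemma Q_ext_kernel: "Q_ext i \<in> borel \<rightarrow>\<^sub>M prob_algebra borel"
  using kernel by (auto simp: Q_ext_def space_prob_algebra intro!: prob_space_return)

lemma prob_space_Q_ext: "prob_space (Q_ext i x)"
  and sets_Q_ext: "sets (Q_ext i x) = sets borel"
  using measurable_space[OF Q_ext_kernel] by (auto simp: space_prob_algebra)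

lemma PiM_Q_ext: "PiM {..<n} (\<lambda>i. Q_ext i x) = PiM {..<n} (\<lambda>i. Q i x)"
  by (intro PiM_cong) (auto simp: Q_ext_def)

lemma prob_space_PiM_Q: "prob_space (PiM {..<n} (\<lambda>i. Q i x))"
  using prob_space_Q by (intro prob_space_PiM) auto

lemma sets_PiM_Q: "sets (PiM {..<n} (\<lambda>i. Q i x)) = sets (obs_space n)"
  unfolding obs_space_def using sets_Q by (intro sets_PiM_cong) auto

lemma measurable_policy_cost:
  assumes \<gamma>: "\<gamma> \<in> team_policies n U" and M: "sets M = sets borel"
  shows "(\<lambda>p. c (fst p) (\<lambda>i\<in>{..<n}. \<gamma> i (snd p i))) \<in> borel_measurable (M \<Otimes>\<^sub>M obs_space n)"
proof -
  define S where "S = (UNIV :: 'x set) \<times> PiE {..<n} U"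
  have "closed S"
    unfolding S_def using compact_U by (intro closed_Times closed_UNIV compact_imp_closed compact_PiE) auto
  \<comment> \<open>\<open>c\<close> is only continuous on \<open>S\<close>; the policies take their values there.\<close>
  then have c_meas: "(\<lambda>q. indicator S q *\<^sub>R c (fst q) (snd q)) \<in> borel_measurable borel"
    using borel_measurable_continuous_on_indicator[OF borel_closed] continuous_cost unfolding S_def by blast
  have "(\<lambda>p. \<lambda>i\<in>{..<n}. \<gamma> i (snd p i)) \<in> borel_measurable (M \<Otimes>\<^sub>M obs_space n)"
  proof (rule measurable_coordinatewise_then_product)
    fix i
    show "(\<lambda>p. (\<lambda>i\<in>{..<n}. \<gamma> i (snd p i)) i) \<in> borel_measurable (M \<Otimes>\<^sub>M obs_space n)"
    proof (cases "i < n")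
      case True
      have "(\<lambda>p. snd p i) \<in> (M \<Otimes>\<^sub>M obs_space n) \<rightarrow>\<^sub>M borel"
        using measurable_compose[OF measurable_snd measurable_component_singleton[of i "{..<n}" "\<lambda>_. borel"]] True
        unfolding obs_space_def by (simp add: comp_def)
      moreover have "\<gamma> i \<in> borel \<rightarrow>\<^sub>M borel" using \<gamma> True unfolding team_policies_def by blast
      ultimately have "(\<lambda>p. \<gamma> i (snd p i)) \<in> borel_measurable (M \<Otimes>\<^sub>M obs_space n)"
        by (rule measurable_compose)
      then show ?thesis using True by simp
    qed simp
  qed
  moreover have "fst \<in> (M \<Otimes>\<^sub>M obs_space n) \<rightarrow>\<^sub>M borel"
    using measurable_fst measurable_cong_sets[OF refl M] by blast
  ultimately have "(\<lambda>p. (fst p, \<lambda>i\<in>{..<n}. \<gamma> i (snd p i))) \<in> borel_measurable (M \<Otimes>\<^sub>M obs_space n)"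
    by (intro borel_measurable_Pair)
  from measurable_compose[OF this c_meas] show ?thesis
    using team_policy_actions[OF \<gamma>] by (simp add: S_def)
qed

lemma team_cost_info_struct:
  assumes \<zeta>: "prob_space \<zeta>" "sets \<zeta> = sets borel" and \<gamma>: "\<gamma> \<in> team_policies n U"
  shows "team_cost n c (info_struct n Q \<zeta>) \<gamma> = (\<integral>x. cond_team_cost n Q c \<gamma> x \<partial>\<zeta>)"
proof -
  define P where "P x = PiM {..<n} (\<lambda>i. Q i x)" for x
  have "P \<in> borel \<rightarrow>\<^sub>M prob_algebra (obs_space n)"
    unfolding P_def PiM_Q_ext[symmetric] obs_space_def by (rule measurable_PiM_kernels[OF _ Q_ext_kernel]) simp
  then have P: "P \<in> \<zeta> \<rightarrow>\<^sub>M subprob_algebra (obs_space n)"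
    using measurable_prob_algebraD measurable_cong_sets[OF \<zeta>(2) refl] by blast
  define K where "K x = distr (P x) (\<zeta> \<Otimes>\<^sub>M obs_space n) (\<lambda>y. (x, y))" for x
  have K: "K \<in> \<zeta> \<rightarrow>\<^sub>M subprob_algebra (\<zeta> \<Otimes>\<^sub>M obs_space n)"
    unfolding K_def by (rule measurable_distr2[OF _ P]) simp
  define H where "H p = c (fst p) (\<lambda>i\<in>{..<n}. \<gamma> i (snd p i))" for p :: "'x \<times> (nat \<Rightarrow> 'y)"
  have H: "H \<in> borel_measurable (\<zeta> \<Otimes>\<^sub>M obs_space n)"
    unfolding H_def by (rule measurable_policy_cost[OF \<gamma> \<zeta>(2)])
  have "team_cost n c (info_struct n Q \<zeta>) \<gamma> = integral\<^sup>L (\<zeta> \<bind> K) H"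
    unfolding team_cost_def info_struct_def K_def P_def H_def ..
  also have "\<dots> = (\<integral>x. integral\<^sup>L (K x) H \<partial>\<zeta>)"
  proof (rule integral_bind[OF H _ K])
    show "\<bar>H p\<bar> \<le> B" for p unfolding H_def using cost_bounded team_policy_actions[OF \<gamma>] by blast
    show "AE x in \<zeta>. emeasure (K x) (space (K x)) \<le> ennreal 1"
      using measurable_space[OF K] by (intro AE_I2) (auto simp: space_subprob_algebra subprob_space.subprob_emeasure_le_1)
  qed (use \<zeta>(1) prob_space.finite_measure in auto)
  also have "\<dots> = (\<integral>x. cond_team_cost n Q c \<gamma> x \<partial>\<zeta>)"
  proof (rule Bochner_Integration.integral_cong[OF refl])
    fix x assume x: "x \<in> space \<zeta>"
    have "sets (P x) = sets (obs_space n)"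
      using measurable_space[OF P x] by (simp add: space_subprob_algebra)
    then have "Pair x \<in> P x \<rightarrow>\<^sub>M \<zeta> \<Otimes>\<^sub>M obs_space n"
      using measurable_Pair1'[OF x, of "obs_space n"] measurable_cong_sets by blast
    then show "integral\<^sup>L (K x) H = cond_team_cost n Q c \<gamma> x"
      unfolding K_def cond_team_cost_def P_def[symmetric] using H by (simp add: integral_distr H_def)
  qed
  finally show ?thesis .
qed

lemma measurable_policy_cost_section:
  "\<gamma> \<in> team_policies n U \<Longrightarrow> (\<lambda>y. c x (\<lambda>i\<in>{..<n}. \<gamma> i (y i))) \<in> borel_measurable (obs_space n)"
  using measurable_Pair2[OF measurable_policy_cost[of \<gamma> borel], of x] by simp

lemma measurable_policy_cost_section_PiM_Q:
  "\<gamma> \<in> team_policies n U \<Longrightarrow> (\<lambda>y. c x (\<lambda>i\<in>{..<n}. \<gamma> i (y i))) \<in> borel_measurable (PiM {..<n} (\<lambda>i. Q i z))"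
  using measurable_policy_cost_section by (simp add: measurable_cong_sets[OF sets_PiM_Q refl])

lemma abs_cond_team_cost_le:
  assumes "\<gamma> \<in> team_policies n U" shows "\<bar>cond_team_cost n Q c \<gamma> x\<bar> \<le> B"
  unfolding cond_team_cost_def
proof (rule abs_integral_le_bound_prob[OF prob_space_PiM_Q])
  show "\<bar>c x (\<lambda>i\<in>{..<n}. \<gamma> i (y i))\<bar> \<le> B" for y
    using cost_bounded team_policy_actions[OF assms] by blast
qed (rule measurable_policy_cost_section_PiM_Q[OF assms])

lemma abs_cond_team_cost_diff_le:
  assumes \<gamma>: "\<gamma> \<in> team_policies n U" and \<eta>: "\<And>u. u \<in> PiE {..<n} U \<Longrightarrow> \<bar>c x' u - c x u\<bar> \<le> \<eta>"
  shows "\<bar>cond_team_cost n Q c \<gamma> x' - cond_team_cost n Q c \<gamma> x\<bar> \<le> \<eta> + B * (\<Sum>i<n. tv_dist (Q i x') (Q i x))"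
proof -
  let ?P = "\<lambda>z. PiM {..<n} (\<lambda>i. Q i z)" and ?f = "\<lambda>z y. c z (\<lambda>i\<in>{..<n}. \<gamma> i (y i))"
  note f_meas = measurable_policy_cost_section_PiM_Q[OF \<gamma>]
  have f_int: "integrable (?P w) (?f z)" for z w
  proof (rule integrable_bounded_prob[OF prob_space_PiM_Q f_meas])
    show "\<bar>?f z y\<bar> \<le> B" for y using cost_bounded team_policy_actions[OF \<gamma>] by blast
  qed
  have "\<bar>(\<integral>y. ?f x' y \<partial>?P x') - (\<integral>y. ?f x y \<partial>?P x')\<bar> = \<bar>\<integral>y. ?f x' y - ?f x y \<partial>?P x'\<bar>"
    using f_int by simp
  also have "\<dots> \<le> \<eta>"
    using prob_space_PiM_Q f_meas \<eta> team_policy_actions[OF \<gamma>] by (intro abs_integral_le_bound_prob) auto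
  finally have cost_change: "\<bar>(\<integral>y. ?f x' y \<partial>?P x') - (\<integral>y. ?f x y \<partial>?P x')\<bar> \<le> \<eta>" .
  have "\<bar>(\<integral>y. ?f x y \<partial>?P x') - (\<integral>y. ?f x y \<partial>?P x)\<bar> \<le> 2 * B * (\<Sum>i<n. tv_dist (Q i x') (Q i x) / 2)"
    unfolding PiM_Q_ext[symmetric]
  proof (rule abs_integral_PiM_diff_le[where N="\<lambda>_. borel"])
    show "\<bar>measure (Q_ext i x') A - measure (Q_ext i x) A\<bar> \<le> tv_dist (Q i x') (Q i x) / 2"
      if "i \<in> {..<n}" "A \<in> sets borel" for i A
      using abs_measure_diff_le_tv_dist[of "Q i x'" "Q i x" A] prob_space_Q sets_Q that
      by (simp add: Q_ext_def)
    show "?f x \<in> borel_measurable (PiM {..<n} (\<lambda>_. borel))"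
      using measurable_policy_cost_section[OF \<gamma>] unfolding obs_space_def .
    show "\<bar>?f x y\<bar> \<le> B" for y using cost_bounded team_policy_actions[OF \<gamma>] by blast
  qed (simp_all add: prob_space_Q_ext sets_Q_ext)
  then have "\<bar>(\<integral>y. ?f x y \<partial>?P x') - (\<integral>y. ?f x y \<partial>?P x)\<bar> \<le> B * (\<Sum>i<n. tv_dist (Q i x') (Q i x))"
    by (simp add: sum_divide_distrib[symmetric])
  with cost_change show ?thesis unfolding cond_team_cost_def by (simp add: abs_le_iff)
qed

lemma cond_team_cost_equicontinuous:
  assumes "0 < e"
  shows "\<exists>d>0. \<forall>y. dist y x < d \<longrightarrow>
    (\<forall>\<gamma>\<in>team_policies n U. \<bar>cond_team_cost n Q c \<gamma> y - cond_team_cost n Q c \<gamma> x\<bar> \<le> e)"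
proof -
  have "\<forall>\<^sub>F y in at x. \<forall>\<gamma>\<in>team_policies n U. \<bar>cond_team_cost n Q c \<gamma> y - cond_team_cost n Q c \<gamma> x\<bar> \<le> e"
  proof (rule sequentially_imp_eventually_at, intro allI impI)
    fix xs assume "(\<forall>m. xs m \<noteq> x) \<and> xs \<longlonglongrightarrow> x"
    then have xs: "xs \<longlonglongrightarrow> x" by blast
    have "uniform_limit (PiE {..<n} U) (\<lambda>m. c (xs m)) (c x) sequentially"
      using compact_U by (intro uniform_limit_continuous_on_compact_section compact_PiE continuous_cost xs) auto
    then have "\<forall>\<^sub>F m in sequentially. \<forall>u\<in>PiE {..<n} U. dist (c (xs m) u) (c x u) < e / 2"
      using \<open>0 < e\<close> by (intro uniform_limitD) auto
    then have "\<forall>\<^sub>F m in sequentially. \<forall>u\<in>PiE {..<n} U. \<bar>c (xs m) u - c x u\<bar> \<le> e / 2"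
      by eventually_elim (simp add: dist_real_def less_imp_le)
    moreover have "(\<lambda>m. B * (\<Sum>i<n. tv_dist (Q i (xs m)) (Q i x))) \<longlonglongrightarrow> B * 0"
      using tv_continuous[OF _ xs] by (intro tendsto_intros tendsto_null_sum) auto
    then have "\<forall>\<^sub>F m in sequentially. B * (\<Sum>i<n. tv_dist (Q i (xs m)) (Q i x)) < e / 2"
      using \<open>0 < e\<close> by (intro order_tendstoD(2)) auto
    ultimately show "\<forall>\<^sub>F m in sequentially. \<forall>\<gamma>\<in>team_policies n U.
        \<bar>cond_team_cost n Q c \<gamma> (xs m) - cond_team_cost n Q c \<gamma> x\<bar> \<le> e"
    proof eventually_elim
      case (elim m)
      show ?case
      proof
        fix \<gamma> :: "nat \<Rightarrow> 'y \<Rightarrow> 'u" assume "\<gamma> \<in> team_policies n U"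
        from abs_cond_team_cost_diff_le[OF this, where x'="xs m" and x=x and \<eta>="e / 2"] elim
        show "\<bar>cond_team_cost n Q c \<gamma> (xs m) - cond_team_cost n Q c \<gamma> x\<bar> \<le> e" by simp
      qed
    qed
  qed
  then obtain d where d: "0 < d" "\<And>y. y \<noteq> x \<Longrightarrow> dist y x < d \<Longrightarrow>
      \<forall>\<gamma>\<in>team_policies n U. \<bar>cond_team_cost n Q c \<gamma> y - cond_team_cost n Q c \<gamma> x\<bar> \<le> e"
    unfolding eventually_at by auto
  show ?thesis
  proof (intro exI conjI allI impI)
    fix y assume "dist y x < d"
    then show "\<forall>\<gamma>\<in>team_policies n U. \<bar>cond_team_cost n Q c \<gamma> y - cond_team_cost n Q c \<gamma> x\<bar> \<le> e"
      using d(2) \<open>0 < e\<close> by (cases "y = x") auto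
  qed (fact d(1))
qed

lemma team_policies_nonempty: "team_policies n U \<noteq> {}"
proof -
  have "(\<lambda>i y. SOME u. u \<in> U i) \<in> team_policies n U"
    using U_nonempty by (auto simp: team_policies_def some_in_eq)
  then show ?thesis by blast
qed

lemma abs_integral_cond_team_cost_le:
  assumes "prob_space \<zeta>" "sets \<zeta> = sets borel" "\<gamma> \<in> team_policies n U"
  shows "\<bar>\<integral>x. cond_team_cost n Q c \<gamma> x \<partial>\<zeta>\<bar> \<le> B"
proof (rule abs_integral_le_bound_prob[OF assms(1)])
  have "continuous_on UNIV (cond_team_cost n Q c \<gamma>)"
  proof (rule continuous_on_UNIV_if_dist_abs_le)
    fix x and e :: real assume "0 < e"
    from cond_team_cost_equicontinuous[OF this, of x] assms(3)
    show "\<exists>d>0. \<forall>y. dist y x < d \<longrightarrow> \<bar>cond_team_cost n Q c \<gamma> y - cond_team_cost n Q c \<gamma> x\<bar> \<le> e"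
      by blast
  qed
  then show "cond_team_cost n Q c \<gamma> \<in> borel_measurable \<zeta>"
    by (simp add: measurable_cong_sets[OF assms(2) refl] borel_measurable_continuous_onI)
qed (simp add: abs_cond_team_cost_le[OF assms(3)])

lemma team_value_info_struct:
  "prob_space \<zeta> \<Longrightarrow> sets \<zeta> = sets borel \<Longrightarrow>
    team_value n U c (info_struct n Q \<zeta>) = (INF \<gamma>\<in>team_policies n U. \<integral>x. cond_team_cost n Q c \<gamma> x \<partial>\<zeta>)"
  unfolding team_value_def by (simp add: team_cost_info_struct)

end

theorem theorem4p2:
  fixes n :: nat
    and U :: "nat \<Rightarrow> 'u::polish_space set"
    and c :: "'x::polish_space \<Rightarrow> (nat \<Rightarrow> 'u) \<Rightarrow> real"
    and Q :: "nat \<Rightarrow> 'x \<Rightarrow> 'y::polish_space measure"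
    and \<zeta> :: "'x measure"
    and \<zeta>s :: "nat \<Rightarrow> 'x measure"
  assumes A4: "\<forall>i<n. compact (U i) \<and> U i \<noteq> {}"
    and A2_cont: "continuous_on (UNIV \<times> PiE {..<n} U) (\<lambda>p. c (fst p) (snd p))"
    and A2_bdd: "\<exists>B. \<forall>x. \<forall>u\<in>PiE {..<n} U. \<bar>c x u\<bar> \<le> B"
    and kernel: "\<forall>i<n. Q i \<in> borel \<rightarrow>\<^sub>M prob_algebra borel"
    and A6: "\<forall>i<n. \<forall>x xs. xs \<longlonglongrightarrow> x \<longrightarrow> (\<lambda>m. tv_dist (Q i (xs m)) (Q i x)) \<longlonglongrightarrow> 0"
    and prior: "prob_space \<zeta>" "sets \<zeta> = sets borel"
    and priors: "\<forall>m. prob_space (\<zeta>s m) \<and> sets (\<zeta>s m) = sets borel"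
    and A3: "assumption_A3 n Q \<zeta>" "\<forall>m. assumption_A3 n Q (\<zeta>s m)"
    and conv: "weak_conv_seq \<zeta>s \<zeta>"
  shows "(\<lambda>m. team_value n U c (info_struct n Q (\<zeta>s m))) \<longlonglongrightarrow> team_value n U c (info_struct n Q \<zeta>)"
proof -
  obtain B where "\<forall>x. \<forall>u\<in>PiE {..<n} U. \<bar>c x u\<bar> \<le> B" using A2_bdd by blast
  then interpret team_problem n U c Q B
    using A4 A2_cont kernel A6 by unfold_locales auto
  have unif: "uniform_limit (team_policies n U)
      (\<lambda>m \<gamma>. \<integral>x. cond_team_cost n Q c \<gamma> x \<partial>\<zeta>s m) (\<lambda>\<gamma>. \<integral>x. cond_team_cost n Q c \<gamma> x \<partial>\<zeta>) sequentially"
    using priors prior conv abs_cond_team_cost_le cond_team_cost_equicontinuous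
    by (intro weak_conv_seq_uniform_limit) auto
  have bdd: "bdd_below ((\<lambda>\<gamma>. \<integral>x. cond_team_cost n Q c \<gamma> x \<partial>\<zeta>) ` team_policies n U)"
    using abs_integral_cond_team_cost_le[OF prior] by (intro bdd_belowI2[where m="-B"]) (force simp: abs_le_iff)
  from tendsto_INF_uniform_limit[OF team_policies_nonempty bdd unif] show ?thesis
    using prior priors by (simp add: team_value_info_struct)
qed

end
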